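(* For every positive integer $n$, the Wiener indices of the spiro ortho-chain $O_n$, the spiro meta-chain $M_n$ and the spiro para-chain $P_n$ are $$W(O_n)=\frac{25}{6}n^3+\frac{65}{2}n^2-\frac{29}{3}n,\quad W(M_n)=\frac{25}{3}n^3+20n^2-\frac{4}{3}n,\quad W(P_n)=\frac{25}{2}n^3+\frac{15}{2}n^2+7n.$$
   Context: The Wiener index is $W(G)=\sum_{\{u,v\}\subseteq V(G)}d_G(u,v)$, $d_G$ the shortest-path distance. A spiro hexagonal chain of length $n$, $G_n=H_0H_1\cdots H_{n-1}$, is a connected graph in which every block is a hexagon (6-cycle) $H_0,\dots,H_{n-1}$, each hexagon has at most two cut-vertices, each cut-vertex is shared by exactly two hexagons, and for $k=1,\dots,n-1$ the hexagons $H_{k-1}$ and $H_k$ share the cut-vertex $c_k$. For $k\ge1$, a vertex of $H_k$ at distance $1$, $2$, $3$ from $c_k$ is called an ortho-, meta-, para-vertex of $H_k$, denoted $o_k,m_k,p_k$. The spiro ortho-chain $O_n$ is the spiro hexagonal chain with $c_k=o_{k-1}$ for all $2\le k\le n-1$; the spiro meta-chain $M_n$ has $c_k=m_{k-1}$ and the spiro para-chain $P_n$ has $c_k=p_{k-1}$ for all $2\le k\le n-1$ (for $n\le2$ these conditions are vacuous). *)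

theory Defs
  imports Complex_Main "HOL-Library.Product_Lexorder"
begin

definition is_walk :: "('a \<Rightarrow> 'a \<Rightarrow> bool) \<Rightarrow> 'a list \<Rightarrow> bool" where
  "is_walk E xs \<longleftrightarrow> xs \<noteq> [] \<and> (\<forall>i. Suc i < length xs \<longrightarrow> E (xs ! i) (xs ! Suc i))"

definition gdist :: "('a \<Rightarrow> 'a \<Rightarrow> bool) \<Rightarrow> 'a \<Rightarrow> 'a \<Rightarrow> nat" where
  "gdist E u v = (LEAST n. \<exists>xs. is_walk E xs \<and> hd xs = u \<and> last xs = v \<and> length xs = Suc n)"

definition wiener :: "'a::linorder set \<Rightarrow> ('a \<Rightarrow> 'a \<Rightarrow> bool) \<Rightarrow> nat" where
  "wiener V E = (\<Sum>S \<in> {S. S \<subseteq> V \<and> card S = 2}. gdist E (Min S) (Max S))"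

text \<open>Hexagon H_k has positions j = 0..5 around the cycle. For k \<ge> 1, position 0
 of H_k is the cut-vertex c_k, which is identified with position t of H_(k-1).
 Since position 0 of H_(k-1) is c_(k-1) (for k \<ge> 2), c_k is at distance
 t from c_(k-1) in H_(k-1): t = 1 gives ortho, t = 2 meta, t = 3 para.
 (For k = 1 any vertex of H_0 may serve, by symmetry of the hexagon.)\<close>

definition spiro_pos :: "nat \<Rightarrow> nat \<Rightarrow> nat \<Rightarrow> nat \<times> nat" where
  "spiro_pos t k j = (if 1 \<le> k \<and> j = 0 then (k - 1, t) else (k, j))"

definition spiro_V :: "nat \<Rightarrow> nat \<Rightarrow> (nat \<times> nat) set" where
  "spiro_V t n = {spiro_pos t k j | k j. k < n \<and> j < 6}"

definition spiro_E :: "nat \<Rightarrow> nat \<Rightarrow> nat \<times> nat \<Rightarrow> nat \<times> nat \<Rightarrow> bool" where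
  "spiro_E t n u v \<longleftrightarrow> (\<exists>k j. k < n \<and> j < 6 \<and>
     ((u = spiro_pos t k j \<and> v = spiro_pos t k ((j + 1) mod 6)) \<or>
      (v = spiro_pos t k j \<and> u = spiro_pos t k ((j + 1) mod 6))))"

abbreviation ortho_V where "ortho_V n \<equiv> spiro_V 1 n"
abbreviation ortho_E where "ortho_E n \<equiv> spiro_E 1 n"
abbreviation meta_V where "meta_V n \<equiv> spiro_V 2 n"
abbreviation meta_E where "meta_E n \<equiv> spiro_E 2 n"
abbreviation para_V where "para_V n \<equiv> spiro_V 3 n"
abbreviation para_E where "para_E n \<equiv> spiro_E 3 n"

end

theory Submission
  imports Defs
begin

text \<open>Number the positions of every hexagon cyclically, position 0 of H_k (k \<ge> 1) being the
  cut vertex c_k, which sits at position t of H_(k-1). A shortest path from H_k to H_m, k < m,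
  runs through c_(k+1), ..., c_m and needs d(0, t) edges inside each hexagon crossed; this gives
  an explicit distance formula, which is confirmed as the graph distance by checking that it
  changes by at most one along every edge and drops by exactly one along a suitable edge.
  The Wiener index is then computed by adding the hexagons one at a time: the five new
  vertices of H_m reach every old vertex through c_m, so the step adds 5 T_m + 9 (5m + 1) + 18,
  where the transmission T_m of c_m itself grows by 5 m d(0, t) + 9. The result is
  W = 25 d(0, t) C(n, 3) + 90 C(n, 2) + 27 n.\<close>

lemma is_walk_Cons_Cons:
  "is_walk E (x # y # ys) \<longleftrightarrow> E x y \<and> is_walk E (y # ys)"
  unfolding is_walk_def by (auto simp: nth_Cons split: nat.splits)

lemma is_walk_singleton [simp]: "is_walk E [x]"
  by (simp add: is_walk_def)

lemma walk_length_ge_potential: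
  assumes lip: "\<And>u w v. E u w \<Longrightarrow> v \<in> V \<Longrightarrow> f u v \<le> f w v + 1"
    and refl: "\<And>v. v \<in> V \<Longrightarrow> f v v = 0"
    and walk: "is_walk E xs" and last: "last xs \<in> V"
  shows "f (hd xs) (last xs) < length xs"
  using walk last
proof (induction xs rule: induct_list012)
  case (3 x y zs)
  then have "E x y" and "f y (last (y # zs)) < length (y # zs)"
    by (auto simp: is_walk_Cons_Cons)
  with lip[of x y] "3.prems"(2) show ?case by fastforce
qed (auto simp: is_walk_def refl)

lemma walk_of_potential_descent:
  assumes descent: "\<And>u v. u \<in> V \<Longrightarrow> v \<in> V \<Longrightarrow> u \<noteq> v \<Longrightarrow> \<exists>w\<in>V. E u w \<and> f w v + 1 = f u v"
    and refl: "\<And>v. v \<in> V \<Longrightarrow> f v v = 0"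
    and "u \<in> V" "v \<in> V"
  shows "\<exists>xs. is_walk E xs \<and> hd xs = u \<and> last xs = v \<and> length xs = Suc (f u v)"
  using \<open>u \<in> V\<close>
proof (induction "f u v" arbitrary: u)
  case 0
  then have "u = v" using descent[of u v] \<open>v \<in> V\<close> by force
  then show ?case using refl \<open>v \<in> V\<close> by (intro exI[of _ "[u]"]) simp
next
  case (Suc d)
  then have "u \<noteq> v" using refl \<open>v \<in> V\<close> by force
  then obtain w where "w \<in> V" "E u w" and "f w v = d"
    using descent[of u v] Suc.hyps(2) Suc.prems \<open>v \<in> V\<close> by force
  then obtain xs where xs: "is_walk E xs" "hd xs = w" "last xs = v" "length xs = Suc d"
    using Suc.hyps(1) by blast
  then have "is_walk E (u # xs)"
    using \<open>E u w\<close> by (cases xs) (auto simp: is_walk_Cons_Cons)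
  with xs Suc.hyps(2) show ?case by (intro exI[of _ "u # xs"]) auto
qed

lemma gdist_eq_potential:
  assumes lip: "\<And>u w v. E u w \<Longrightarrow> v \<in> V \<Longrightarrow> f u v \<le> f w v + 1"
    and refl: "\<And>v. v \<in> V \<Longrightarrow> f v v = 0"
    and descent: "\<And>u v. u \<in> V \<Longrightarrow> v \<in> V \<Longrightarrow> u \<noteq> v \<Longrightarrow> \<exists>w\<in>V. E u w \<and> f w v + 1 = f u v"
    and "u \<in> V" "v \<in> V"
  shows "gdist E u v = f u v"
  unfolding gdist_def
proof (rule Least_equality)
  show "\<exists>xs. is_walk E xs \<and> hd xs = u \<and> last xs = v \<and> length xs = Suc (f u v)"
    using walk_of_potential_descent[of V E f, OF descent refl] assms(4,5) by blast
next
  fix d assume "\<exists>xs. is_walk E xs \<and> hd xs = u \<and> last xs = v \<and> length xs = Suc d"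
  then show "f u v \<le> d"
    using walk_length_ge_potential[of E V f, OF lip refl] \<open>v \<in> V\<close> by fastforce
qed

lemma sum_card2_subsets_Min_Max:
  fixes g :: "'a::linorder \<Rightarrow> 'a \<Rightarrow> nat"
  assumes "finite V" and sym: "\<And>u v. g u v = g v u" and refl: "\<And>u. g u u = 0"
  shows "2 * (\<Sum>S\<in>{S. S \<subseteq> V \<and> card S = 2}. g (Min S) (Max S)) = (\<Sum>u\<in>V. \<Sum>v\<in>V. g u v)"
  using assms(1)
proof (induction V rule: finite_induct)
  case empty
  have "{S. S \<subseteq> ({}::'a set) \<and> card S = 2} = {}" by auto
  then show ?case by simp
next
  case (insert x F)
  have split: "{S. S \<subseteq> insert x F \<and> card S = 2} = {S. S \<subseteq> F \<and> card S = 2} \<union> (\<lambda>v. {x, v}) ` F"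
    using insert.hyps(2) by (auto simp: card_2_iff subset_insert_iff insert_commute)
  have disj: "{S. S \<subseteq> F \<and> card S = 2} \<inter> (\<lambda>v. {x, v}) ` F = {}" using insert.hyps by auto
  have inj: "inj_on (\<lambda>v. {x, v}) F" using insert.hyps by (auto simp: inj_on_def doubleton_eq_iff)
  have "g (Min {x, v}) (Max {x, v}) = g x v" for v
    by (cases "x \<le> v") (auto simp: sym min_def max_def)
  then have "(\<Sum>S\<in>{S. S \<subseteq> insert x F \<and> card S = 2}. g (Min S) (Max S)) =
      (\<Sum>S\<in>{S. S \<subseteq> F \<and> card S = 2}. g (Min S) (Max S)) + (\<Sum>v\<in>F. g x v)"
    unfolding split using insert.hyps(1) disj inj
    by (simp add: sum.union_disjoint sum.reindex)
  moreover have "(\<Sum>u\<in>insert x F. \<Sum>v\<in>insert x F. g u v) = (\<Sum>u\<in>F. \<Sum>v\<in>F. g u v) + 2 * (\<Sum>v\<in>F. g x v)"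
    using insert.hyps by (simp add: sum.distrib refl sym[of _ x])
  ultimately show ?case using insert.IH by simp
qed

lemma sum_sum_union_symmetric:
  fixes g :: "'a \<Rightarrow> 'a \<Rightarrow> 'b::comm_semiring_1"
  assumes "finite A" "finite B" "A \<inter> B = {}" and sym: "\<And>u v. g u v = g v u"
  shows "(\<Sum>u\<in>A \<union> B. \<Sum>v\<in>A \<union> B. g u v) =
    (\<Sum>u\<in>A. \<Sum>v\<in>A. g u v) + 2 * (\<Sum>u\<in>A. \<Sum>v\<in>B. g u v) + (\<Sum>u\<in>B. \<Sum>v\<in>B. g u v)"
proof -
  have "(\<Sum>u\<in>B. \<Sum>v\<in>A. g u v) = (\<Sum>u\<in>A. \<Sum>v\<in>B. g u v)"
    by (subst sum.swap) (simp add: sym)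
  then show ?thesis
    using assms(1-3) by (simp add: sum.union_disjoint sum.distrib algebra_simps mult_2)
qed

lemma sum_singleton_Times: "(\<Sum>u\<in>{x} \<times> A. f u) = (\<Sum>a\<in>A. f (x, a))"
  by (rule sum.reindex_bij_witness[of _ "Pair x" snd]) auto

definition hex_dist :: "nat \<Rightarrow> nat \<Rightarrow> nat" where
  "hex_dist a b = (let d = (if a \<le> b then b - a else a - b) in min d (6 - d))"

lemma hex_dist_commute: "hex_dist a b = hex_dist b a"
  unfolding hex_dist_def Let_def by auto

lemma hex_dist_self [simp]: "hex_dist a a = 0"
  by (simp add: hex_dist_def)

lemma less_6_cases: "(j::nat) < 6 \<Longrightarrow> j = 0 \<or> j = 1 \<or> j = 2 \<or> j = 3 \<or> j = 4 \<or> j = 5"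
  by auto

lemma hex_dist_Suc_mod_le:
  assumes "a < 6" "c < 6"
  shows "hex_dist a c \<le> hex_dist (Suc a mod 6) c + 1" "hex_dist (Suc a mod 6) c \<le> hex_dist a c + 1"
  using less_6_cases[OF assms(1)] less_6_cases[OF assms(2)]
  by (auto simp: hex_dist_def)

lemma hex_dist_descent:
  assumes "a < 6" "c < 6" "a \<noteq> c"
  shows "\<exists>p\<in>{Suc a mod 6, (a + 5) mod 6}. hex_dist p c + 1 = hex_dist a c"
  using less_6_cases[OF assms(1)] less_6_cases[OF assms(2)] assms(3)
  by (auto simp: hex_dist_def)

text \<open>A vertex of hexagon \<open>h\<close> is joined to \<open>v\<close> by a shortest path that leaves the hexagon
  through position \<open>exit_pos t h v\<close> (the cut vertex towards \<open>v\<close>, or \<open>v\<close> itself) and then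
  needs \<open>exit_dist t h v\<close> further edges.\<close>

definition exit_pos :: "nat \<Rightarrow> nat \<Rightarrow> nat \<times> nat \<Rightarrow> nat" where
  "exit_pos t h v = (if fst v = h then snd v else if h < fst v then t else 0)"

definition exit_dist :: "nat \<Rightarrow> nat \<Rightarrow> nat \<times> nat \<Rightarrow> nat" where
  "exit_dist t h v =
    (if fst v = h then 0
     else if h < fst v then (fst v - h - 1) * hex_dist 0 t + hex_dist 0 (snd v)
     else (h - fst v - 1) * hex_dist 0 t + hex_dist (snd v) t)"

definition spiro_dist :: "nat \<Rightarrow> nat \<times> nat \<Rightarrow> nat \<times> nat \<Rightarrow> nat" where
  "spiro_dist t u v = hex_dist (snd u) (exit_pos t (fst u) v) + exit_dist t (fst u) v"

lemma spiro_dist_self [simp]: "spiro_dist t u u = 0"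
  by (simp add: spiro_dist_def exit_pos_def exit_dist_def)

lemma spiro_dist_commute: "spiro_dist t u v = spiro_dist t v u"
  by (auto simp: spiro_dist_def exit_pos_def exit_dist_def hex_dist_commute)

text \<open>The cut vertex between hexagons \<open>h - 1\<close> and \<open>h\<close> is \<open>(h - 1, t)\<close>, but the distance
  formula gives the same values when it is read as position \<open>0\<close> of hexagon \<open>h\<close>.\<close>

lemma spiro_dist_spiro_pos:
  "spiro_dist t (spiro_pos t h p) v = hex_dist p (exit_pos t h v) + exit_dist t h v"
proof (cases "1 \<le> h \<and> p = 0")
  case True
  have "fst v = h \<or> fst v + 1 = h \<or> (\<exists>d. fst v = h + 1 + d) \<or> (\<exists>d. h = fst v + 2 + d)"
    by presburger
  with True show ?thesis
    by (auto simp: spiro_dist_def spiro_pos_def exit_pos_def exit_dist_def hex_dist_commute)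
qed (auto simp: spiro_dist_def spiro_pos_def)

definition spiro_vertices :: "nat \<Rightarrow> (nat \<times> nat) set" where
  "spiro_vertices n = insert (0, 0) ({..<n} \<times> {1..5})"

lemma spiro_V_eq_spiro_vertices:
  assumes "0 < t" "t < 6" "1 \<le> n"
  shows "spiro_V t n = spiro_vertices n"
proof
  show "spiro_V t n \<subseteq> spiro_vertices n"
    using assms by (auto simp: spiro_V_def spiro_vertices_def spiro_pos_def)
  have "(0, 0) = spiro_pos t 0 0" "\<And>k j. (k, j) = spiro_pos t k j \<or> j = 0"
    by (auto simp: spiro_pos_def)
  then show "spiro_vertices n \<subseteq> spiro_V t n"
    using assms unfolding spiro_V_def spiro_vertices_def by fastforce
qed

lemma spiro_vertices_Suc: "spiro_vertices (Suc n) = spiro_vertices n \<union> {n} \<times> {1..5}"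
  by (auto simp: spiro_vertices_def)

lemma card_spiro_vertices: "card (spiro_vertices n) = 5 * n + 1"
  by (simp add: spiro_vertices_def card_cartesian_product)

lemma spiro_vertex_as_spiro_pos:
  "u \<in> spiro_vertices n \<Longrightarrow> u = spiro_pos t (fst u) (snd u)"
  by (auto simp: spiro_vertices_def spiro_pos_def)

lemma spiro_E_hexagon_neighbours:
  assumes "k < n" "a < 6"
  shows "spiro_E t n (spiro_pos t k a) (spiro_pos t k (Suc a mod 6))"
    and "spiro_E t n (spiro_pos t k a) (spiro_pos t k ((a + 5) mod 6))"
proof -
  show "spiro_E t n (spiro_pos t k a) (spiro_pos t k (Suc a mod 6))"
    unfolding spiro_E_def using assms by auto
  have "Suc ((a + 5) mod 6) mod 6 = a" using less_6_cases[OF assms(2)] by auto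
  then show "spiro_E t n (spiro_pos t k a) (spiro_pos t k ((a + 5) mod 6))"
    unfolding spiro_E_def using assms by (intro exI[of _ k] exI[of _ "(a + 5) mod 6"]) simp
qed

lemma exit_pos_less_6: "t < 6 \<Longrightarrow> snd v < 6 \<Longrightarrow> exit_pos t h v < 6"
  by (simp add: exit_pos_def)

lemma spiro_dist_edge_le:
  assumes "t < 6" "spiro_E t n u w" "snd v < 6"
  shows "spiro_dist t u v \<le> spiro_dist t w v + 1"
proof -
  from assms(2) obtain k j where "j < 6" and
    "(u = spiro_pos t k j \<and> w = spiro_pos t k (Suc j mod 6)) \<or>
     (w = spiro_pos t k j \<and> u = spiro_pos t k (Suc j mod 6))"
    unfolding spiro_E_def by auto
  then show ?thesis
    using hex_dist_Suc_mod_le[OF \<open>j < 6\<close> exit_pos_less_6[OF assms(1,3)]]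
    by (auto simp: spiro_dist_spiro_pos)
qed

text \<open>Only the cut vertex \<open>(k, t)\<close> facing a farther hexagon has to be viewed as position \<open>0\<close>
  of hexagon \<open>k + 1\<close>, since \<open>t\<close> is its own exit position in hexagon \<open>k\<close>.\<close>

lemma spiro_vertex_off_exit:
  assumes "0 < t" "u \<in> spiro_vertices n" "v \<in> spiro_vertices n" "u \<noteq> v"
  shows "\<exists>h p. h < n \<and> p < 6 \<and> u = spiro_pos t h p \<and> p \<noteq> exit_pos t h v"
proof (cases "fst u < fst v \<and> snd u = t")
  case True
  then have "u = spiro_pos t (Suc (fst u)) 0" "0 \<noteq> exit_pos t (Suc (fst u)) v"
    using assms by (auto simp: spiro_pos_def exit_pos_def spiro_vertices_def prod_eq_iff)
  moreover have "Suc (fst u) < n" using True assms(3) by (auto simp: spiro_vertices_def)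
  ultimately show ?thesis by (intro exI[of _ "Suc (fst u)"] exI[of _ 0]) simp
next
  case False
  then have "snd u \<noteq> exit_pos t (fst u) v"
    using assms by (auto simp: exit_pos_def spiro_vertices_def prod_eq_iff)
  moreover have "fst u < n" "snd u < 6" using assms(2-4) by (auto simp: spiro_vertices_def)
  ultimately show ?thesis using spiro_vertex_as_spiro_pos[OF assms(2)] by blast
qed

lemma spiro_dist_descent:
  assumes "0 < t" "t < 6" "u \<in> spiro_vertices n" "v \<in> spiro_vertices n" "u \<noteq> v"
  shows "\<exists>w\<in>spiro_vertices n. spiro_E t n u w \<and> spiro_dist t w v + 1 = spiro_dist t u v"
proof -
  obtain h p where h: "h < n" "p < 6" "u = spiro_pos t h p" "p \<noteq> exit_pos t h v"
    using spiro_vertex_off_exit[OF assms(1,3-5)] by blast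
  have "snd v < 6" using assms(4) by (auto simp: spiro_vertices_def)
  then obtain q where "q \<in> {Suc p mod 6, (p + 5) mod 6}"
    and q: "hex_dist q (exit_pos t h v) + 1 = hex_dist p (exit_pos t h v)"
    using hex_dist_descent[OF \<open>p < 6\<close> exit_pos_less_6[OF assms(2)] h(4)] by blast
  then have "spiro_E t n u (spiro_pos t h q)" and "q < 6"
    using spiro_E_hexagon_neighbours[OF h(1,2)] h(3) by auto
  moreover have "spiro_pos t h q \<in> spiro_vertices n"
    using h(1) \<open>q < 6\<close> assms(1,2) by (auto simp: spiro_vertices_def spiro_pos_def)
  ultimately show ?thesis
    using q h(3) by (intro bexI[of _ "spiro_pos t h q"]) (auto simp: spiro_dist_spiro_pos)
qed

lemma gdist_spiro_E:
  assumes "0 < t" "t < 6" "u \<in> spiro_vertices n" "v \<in> spiro_vertices n"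
  shows "gdist (spiro_E t n) u v = spiro_dist t u v"
proof (rule gdist_eq_potential[where V = "spiro_vertices n"])
  show "spiro_dist t u' v' \<le> spiro_dist t w v' + 1"
    if "spiro_E t n u' w" "v' \<in> spiro_vertices n" for u' w v'
    using spiro_dist_edge_le[OF assms(2) that(1)] that(2) by (auto simp: spiro_vertices_def)
qed (use assms spiro_dist_descent in auto)

lemma sum_hex_dist_from_0: "(\<Sum>b\<in>{1..5}. hex_dist 0 b) = 9"
  by (simp add: hex_dist_def numeral_eq_Suc atLeastAtMostSuc_conv)

lemma sum_hex_dist_to: "0 < c \<Longrightarrow> c < 6 \<Longrightarrow> (\<Sum>a\<in>{1..5}. hex_dist a c) + hex_dist 0 c = 9"
  using less_6_cases[of c] by (auto simp: hex_dist_def numeral_eq_Suc atLeastAtMostSuc_conv)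

lemma sum_sum_hex_dist: "(\<Sum>a\<in>{1..5}. \<Sum>b\<in>{1..5}. hex_dist a b) = 36"
  by (simp add: hex_dist_def numeral_eq_Suc atLeastAtMostSuc_conv)

text \<open>In the distance formula \<open>(m, 0)\<close> stands for the cut vertex through which hexagon \<open>m\<close>
  is entered from below (the vertex \<open>(0, 0)\<close> if \<open>m = 0\<close>).\<close>

lemma spiro_dist_through_entry:
  "u \<in> spiro_vertices m \<Longrightarrow> spiro_dist t u (m, b) = spiro_dist t u (m, 0) + hex_dist 0 b"
  by (auto simp: spiro_vertices_def spiro_dist_def exit_pos_def exit_dist_def)

lemma spiro_dist_to_next_entry:
  "u \<in> spiro_vertices m \<Longrightarrow> spiro_dist t u (Suc m, 0) = spiro_dist t u (m, 0) + hex_dist 0 t"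
  by (auto simp: spiro_vertices_def spiro_dist_def exit_pos_def exit_dist_def
      simp flip: Suc_diff_Suc)

lemma sum_spiro_vertices_Suc:
  "(\<Sum>u\<in>spiro_vertices (Suc m). f u) = (\<Sum>u\<in>spiro_vertices m. f u) + (\<Sum>a\<in>{1..5}. f (m, a))"
  unfolding spiro_vertices_Suc
  by (subst sum.union_disjoint) (auto simp: spiro_vertices_def sum_singleton_Times)

lemma spiro_transmission:
  assumes "0 < t" "t < 6"
  shows "2 * real (\<Sum>u\<in>spiro_vertices m. spiro_dist t u (m, 0)) =
    18 * real m + 5 * hex_dist 0 t * real m * (real m - 1)"
proof (induction m)
  case 0
  then show ?case by (simp add: spiro_vertices_def)
next
  case (Suc m)
  have "(\<Sum>u\<in>spiro_vertices m. spiro_dist t u (Suc m, 0)) =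
      (\<Sum>u\<in>spiro_vertices m. spiro_dist t u (m, 0)) + (5 * m + 1) * hex_dist 0 t"
    by (simp add: spiro_dist_to_next_entry sum.distrib card_spiro_vertices)
  moreover have "spiro_dist t (m, a) (Suc m, 0) = hex_dist a t" for a
    by (simp add: spiro_dist_def exit_pos_def exit_dist_def)
  ultimately have "(\<Sum>u\<in>spiro_vertices (Suc m). spiro_dist t u (Suc m, 0)) =
      (\<Sum>u\<in>spiro_vertices m. spiro_dist t u (m, 0)) + (5 * m + 1) * hex_dist 0 t
      + (\<Sum>a\<in>{1..5}. hex_dist a t)"
    by (simp add: sum_spiro_vertices_Suc)
  then have "(\<Sum>u\<in>spiro_vertices (Suc m). spiro_dist t u (Suc m, 0)) + hex_dist 0 t =
      (\<Sum>u\<in>spiro_vertices m. spiro_dist t u (m, 0)) + (5 * m + 1) * hex_dist 0 t + 9"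
    using sum_hex_dist_to[OF assms] by simp
  then show ?case
    using Suc.IH by (simp add: algebra_simps)
qed

lemma spiro_double_sum:
  assumes "0 < t" "t < 6"
  shows "real (\<Sum>u\<in>spiro_vertices m. \<Sum>v\<in>spiro_vertices m. spiro_dist t u v) =
    25 / 3 * hex_dist 0 t * real m * (real m - 1) * (real m - 2) + 90 * real m * (real m - 1) + 54 * real m"
proof (induction m)
  case 0
  then show ?case by (simp add: spiro_vertices_def)
next
  case (Suc m)
  let ?d = "spiro_dist t"
  have "(\<Sum>u\<in>spiro_vertices m. \<Sum>v\<in>{m} \<times> {1..5}. ?d u v) =
      5 * (\<Sum>u\<in>spiro_vertices m. ?d u (m, 0)) + 9 * (5 * m + 1)"
  proof -
    have "(\<Sum>v\<in>{m} \<times> {1..5}. ?d u v) = (\<Sum>b\<in>{1..5}. ?d u (m, 0) + hex_dist 0 b)"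
      if "u \<in> spiro_vertices m" for u
      unfolding sum_singleton_Times by (rule sum.cong[OF refl spiro_dist_through_entry[OF that]])
    then have "(\<Sum>v\<in>{m} \<times> {1..5}. ?d u v) = 5 * ?d u (m, 0) + 9" if "u \<in> spiro_vertices m" for u
      using that sum_hex_dist_from_0 by (simp add: sum.distrib)
    then show ?thesis
      by (simp add: sum.distrib sum_distrib_left card_spiro_vertices)
  qed
  moreover have "(\<Sum>u\<in>{m} \<times> {1..5}. \<Sum>v\<in>{m} \<times> {1..5}. ?d u v) = 36"
    using sum_sum_hex_dist by (simp add: sum_singleton_Times spiro_dist_def exit_pos_def exit_dist_def)
  moreover have "(\<Sum>u\<in>spiro_vertices (Suc m). \<Sum>v\<in>spiro_vertices (Suc m). ?d u v) =
      (\<Sum>u\<in>spiro_vertices m. \<Sum>v\<in>spiro_vertices m. ?d u v)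
      + 2 * (\<Sum>u\<in>spiro_vertices m. \<Sum>v\<in>{m} \<times> {1..5}. ?d u v)
      + (\<Sum>u\<in>{m} \<times> {1..5}. \<Sum>v\<in>{m} \<times> {1..5}. ?d u v)"
    unfolding spiro_vertices_Suc
    by (rule sum_sum_union_symmetric) (auto simp: spiro_vertices_def spiro_dist_commute)
  ultimately have "real (\<Sum>u\<in>spiro_vertices (Suc m). \<Sum>v\<in>spiro_vertices (Suc m). ?d u v) =
      real (\<Sum>u\<in>spiro_vertices m. \<Sum>v\<in>spiro_vertices m. ?d u v)
      + 5 * (2 * real (\<Sum>u\<in>spiro_vertices m. ?d u (m, 0))) + 90 * real m + 54"
    by simp
  then show ?case
    using Suc.IH spiro_transmission[OF assms, of m] by (simp add: field_simps)
qed

lemma wiener_spiro_chain: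
  assumes "0 < t" "t < 6" "1 \<le> n"
  shows "real (wiener (spiro_V t n) (spiro_E t n)) =
    25 / 6 * hex_dist 0 t * real n * (real n - 1) * (real n - 2) + 45 * real n * (real n - 1) + 27 * real n"
proof -
  have finite: "finite (spiro_vertices n)" by (simp add: spiro_vertices_def)
  have "wiener (spiro_V t n) (spiro_E t n) =
      (\<Sum>S\<in>{S. S \<subseteq> spiro_vertices n \<and> card S = 2}. spiro_dist t (Min S) (Max S))"
    unfolding wiener_def spiro_V_eq_spiro_vertices[OF assms]
  proof (rule sum.cong)
    fix S assume "S \<in> {S. S \<subseteq> spiro_vertices n \<and> card S = 2}"
    then have "S \<subseteq> spiro_vertices n" "finite S" "S \<noteq> {}"
      by (auto simp: card_2_iff)
    then have "Min S \<in> spiro_vertices n" "Max S \<in> spiro_vertices n"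
      using Min_in Max_in by blast+
    then show "gdist (spiro_E t n) (Min S) (Max S) = spiro_dist t (Min S) (Max S)"
      by (rule gdist_spiro_E[OF assms(1,2)])
  qed simp
  then have "2 * wiener (spiro_V t n) (spiro_E t n) =
      (\<Sum>u\<in>spiro_vertices n. \<Sum>v\<in>spiro_vertices n. spiro_dist t u v)"
    using sum_card2_subsets_Min_Max[of "spiro_vertices n" "spiro_dist t"] finite spiro_dist_commute by simp
  then have "2 * real (wiener (spiro_V t n) (spiro_E t n)) =
      real (\<Sum>u\<in>spiro_vertices n. \<Sum>v\<in>spiro_vertices n. spiro_dist t u v)"
    by (metis of_nat_mult of_nat_numeral)
  then show ?thesis
    using spiro_double_sum[OF assms(1,2), of n] by linarith
qed

theorem corollary2p3:
  fixes n :: nat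
  assumes "n \<ge> 1"
  shows "real (wiener (ortho_V n) (ortho_E n)) = 25/6 * real n ^ 3 + 65/2 * real n ^ 2 - 29/3 * real n \<and>
         real (wiener (meta_V n) (meta_E n)) = 25/3 * real n ^ 3 + 20 * real n ^ 2 - 4/3 * real n \<and>
         real (wiener (para_V n) (para_E n)) = 25/2 * real n ^ 3 + 15/2 * real n ^ 2 + 7 * real n"
proof -
  have "hex_dist 0 1 = 1" "hex_dist 0 2 = 2" "hex_dist 0 3 = 3"
    by (simp_all add: hex_dist_def)
  then show ?thesis
    using wiener_spiro_chain[of 1 n] wiener_spiro_chain[of 2 n] wiener_spiro_chain[of 3 n] assms
    by (simp add: field_simps power2_eq_square power3_eq_cube)
qed

end
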